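(* Let $(\mathcal A,d)$ be a DGA and let $a,b_1,\dots,b_n\in\mathcal A$ be closed with $|a|$ even and each $a\wedge b_i$ exact. If $a',b_1',\dots,b_n'\in\mathcal A$ are closed with $[a']=[a]$ and $[b_i']=[b_i]$ in $H(\mathcal A)$, then $\langle a';b_1',\dots,b_n'\rangle$ is defined and $\langle a';b_1',\dots,b_n'\rangle=\langle a;b_1,\dots,b_n\rangle$. That is, the $a$-Massey product depends only on the cohomology classes $[a],[b_i]$.
   Context: A DGA is a graded-commutative differential graded algebra over $\mathbb R$; $|x|$ denotes degree and $\overline{x}=(-1)^{|x|}x$. Given closed $a,b_1,\dots,b_n\in\mathcal A$ with $|a|$ even and each $a\wedge b_i$ exact, the $a$-Massey product is the subset of $H(\mathcal A)$ $$\langle a;b_1,\dots,b_n\rangle=\Big\{\Big[\sum_{i=1}^n\overline{\xi_1}\wedge\cdots\wedge\overline{\xi_{i-1}}\wedge b_i\wedge\xi_{i+1}\wedge\cdots\wedge\xi_n\Big]\ :\ d\xi_i=a\wedge b_i\Big\}$$ (the elements inside the brackets are closed). *)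

theory Defs
  imports "HOL-Analysis.Analysis"
begin

text \<open>A (unital, associative) DGA over the reals: the carrier is a type of class
  real_algebra_1 (multiplication = wedge product), graded by the integers via
  subspaces G k (the degree-k part), with G the internal direct sum of the G k.\<close>

definition sgn_deg :: "int \<Rightarrow> 'a::real_vector \<Rightarrow> 'a" where
  "sgn_deg k x = (if even k then x else - x)"

definition dga :: "(int \<Rightarrow> 'a::real_algebra_1 set) \<Rightarrow> ('a \<Rightarrow> 'a) \<Rightarrow> bool" where
  "dga G d \<longleftrightarrow>
     (\<forall>k. subspace (G k))
   \<and> (\<forall>x. \<exists>K c. finite K \<and> (\<forall>k\<in>K. c k \<in> G k) \<and> x = (\<Sum>k\<in>K. c k))
   \<and> (\<forall>K c. finite K \<and> (\<forall>k\<in>K. c k \<in> G k) \<and> (\<Sum>k\<in>K. c k) = 0 \<longrightarrow> (\<forall>k\<in>K. c k = 0))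
   \<and> (1::'a) \<in> G 0
   \<and> (\<forall>j k x y. x \<in> G j \<and> y \<in> G k \<longrightarrow> x * y \<in> G (j + k))
   \<and> (\<forall>j k x y. x \<in> G j \<and> y \<in> G k \<longrightarrow> x * y = sgn_deg (j * k) (y * x))
   \<and> linear d
   \<and> (\<forall>k x. x \<in> G k \<longrightarrow> d x \<in> G (k + 1))
   \<and> (\<forall>x. d (d x) = 0)
   \<and> (\<forall>j x y. x \<in> G j \<longrightarrow> d (x * y) = d x * y + sgn_deg j (x * d y))"

text \<open>Cohomology class of an element (meant for closed x) in H = ker d / im d.\<close>
definition hclass :: "('a::real_vector \<Rightarrow> 'a) \<Rightarrow> 'a \<Rightarrow> 'a set" where
  "hclass d x = (\<lambda>z. x + z) ` range d"

definition exact :: "('a \<Rightarrow> 'a) \<Rightarrow> 'a \<Rightarrow> bool" where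
  "exact d x \<longleftrightarrow> x \<in> range d"

text \<open>The a-Massey product <a; b_1,...,b_n>, with a of degree p and b_i of degree q i.
  The primitives xi_i are homogeneous of degree p + q i - 1, and
  overline(xi_i) = (-1)^(p + q i - 1) xi_i.\<close>
definition massey :: "(int \<Rightarrow> 'a::real_algebra_1 set) \<Rightarrow> ('a \<Rightarrow> 'a) \<Rightarrow> int \<Rightarrow> 'a
    \<Rightarrow> (nat \<Rightarrow> int) \<Rightarrow> (nat \<Rightarrow> 'a) \<Rightarrow> nat \<Rightarrow> 'a set set" where
  "massey G d p a q b n =
    { hclass d (\<Sum>i=1..n.
        prod_list (map (\<lambda>j. sgn_deg (p + q j - 1) (\<xi> j)) [1..<i]) * b i
          * prod_list (map \<xi> [Suc i..<Suc n]))
      | \<xi>. \<forall>i\<in>{1..n}. \<xi> i \<in> G (p + q i - 1) \<and> d (\<xi> i) = a * b i }"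

end

theory Submission
  imports Defs
begin

text \<open>Write \<open>a' = a + d\<alpha>\<close> and \<open>b\<^sub>i' = b\<^sub>i + d\<beta>\<^sub>i\<close> with \<open>\<alpha>\<close>, \<open>\<beta>\<^sub>i\<close> homogeneous, which is possible because
  the algebra is the direct sum of its graded pieces. Each substitution induces a map of defining
  systems, inverted by the substitution with \<open>-\<alpha>\<close> resp. \<open>-\<beta>\<^sub>i\<close>. Replacing \<open>\<xi>\<^sub>i\<close> by \<open>\<xi>\<^sub>i + a \<beta>\<^sub>i\<close> changes
  the Massey representative by an exact term \<open>dT\<close>, where \<open>a T\<close> is the difference of the products
  \<open>\<xi>\<^sub>1'\<cdots>\<xi>\<^sub>n'\<close> and \<open>\<xi>\<^sub>1\<cdots>\<xi>\<^sub>n\<close>. Replacing \<open>\<xi>\<^sub>i\<close> by \<open>\<xi>\<^sub>i + \<alpha> b\<^sub>i\<close> does not change the representative at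
  all: \<open>\<alpha>\<close> has odd degree, so \<open>\<alpha>\<^sup>2 = 0\<close> and the cross terms cancel by graded commutativity.\<close>

lemma sgn_deg_mult_left: "sgn_deg k (x::'a::real_algebra_1) * y = sgn_deg k (x * y)"
  by (simp add: sgn_deg_def)

lemma sgn_deg_mult_right: "(x::'a::real_algebra_1) * sgn_deg k y = sgn_deg k (x * y)"
  by (simp add: sgn_deg_def)

lemma sgn_deg_sgn_deg: "sgn_deg j (sgn_deg k (x::'a::real_vector)) = sgn_deg (j + k) x"
  by (simp add: sgn_deg_def)

lemma sgn_deg_add: "sgn_deg k (x + y) = sgn_deg k x + sgn_deg k (y::'a::real_vector)"
  by (simp add: sgn_deg_def)

lemma sgn_deg_mult_sgn_deg:
  "sgn_deg j (x::'a::real_algebra_1) * sgn_deg k y = sgn_deg (j + k) (x * y)"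
  by (simp add: sgn_deg_mult_left sgn_deg_mult_right sgn_deg_sgn_deg add.commute)

lemma hclass_eq_iff:
  assumes "linear d"
  shows "hclass d u = hclass d v \<longleftrightarrow> u - v \<in> range d"
proof
  have sub: "subspace (range d)"
    using linear_subspace_image[OF assms subspace_UNIV] by simp
  have zero: "0 \<in> range d"
    using sub subspace_0 by blast
  show "u - v \<in> range d" if "hclass d u = hclass d v"
  proof -
    have "u \<in> hclass d v"
      using that zero unfolding hclass_def by (metis add.right_neutral image_eqI)
    then obtain z where "z \<in> range d" "u = v + z"
      unfolding hclass_def by blast
    then show ?thesis by simp
  qed
  show "hclass d u = hclass d v" if "u - v \<in> range d"
  proof -
    have "u + z \<in> hclass d v" "v + z \<in> hclass d u" if "z \<in> range d" for z
    proof -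
      have in_range: "(u - v) + z \<in> range d" "z - (u - v) \<in> range d"
        using \<open>u - v \<in> range d\<close> that sub subspace_add subspace_diff by blast+
      show "u + z \<in> hclass d v"
        unfolding hclass_def using in_range(1) by (rule rev_image_eqI) simp
      show "v + z \<in> hclass d u"
        unfolding hclass_def using in_range(2) by (rule rev_image_eqI) simp
    qed
    then show ?thesis
      unfolding hclass_def by blast
  qed
qed

definition prod_upto :: "(nat \<Rightarrow> 'a::monoid_mult) \<Rightarrow> nat \<Rightarrow> 'a" where
  "prod_upto x n = prod_list (map x [1..<Suc n])"

definition massey_sum :: "(nat \<Rightarrow> int) \<Rightarrow> (nat \<Rightarrow> 'a::real_algebra_1) \<Rightarrow> (nat \<Rightarrow> 'a) \<Rightarrow> nat \<Rightarrow> 'a" where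
  "massey_sum e x y n = (\<Sum>i=1..n.
     prod_list (map (\<lambda>j. sgn_deg (e j) (x j)) [1..<i]) * y i * prod_list (map x [Suc i..<Suc n]))"

lemma prod_upto_0 [simp]: "prod_upto x 0 = 1"
  by (simp add: prod_upto_def)

lemma prod_upto_Suc [simp]: "prod_upto x (Suc n) = prod_upto x n * x (Suc n)"
  by (simp add: prod_upto_def)

lemma prod_list_sgn_deg:
  "prod_list (map (\<lambda>j. sgn_deg (e j) (x j)) [Suc 0..<Suc n])
     = sgn_deg (\<Sum>j=1..n. e j) (prod_upto (x :: nat \<Rightarrow> 'a::real_algebra_1) n)"
proof (induction n)
  case 0
  then show ?case by (simp add: sgn_deg_def)
next
  case (Suc n)
  then show ?case by (simp add: sgn_deg_mult_sgn_deg)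
qed

lemma massey_sum_0 [simp]: "massey_sum e x y 0 = 0"
  by (simp add: massey_sum_def)

lemma massey_sum_Suc:
  "massey_sum e x y (Suc n)
     = massey_sum e x y n * x (Suc n) + sgn_deg (\<Sum>j=1..n. e j) (prod_upto x n) * y (Suc n)"
proof -
  have "massey_sum e x y (Suc n) = (\<Sum>i=1..n. prod_list (map (\<lambda>j. sgn_deg (e j) (x j)) [1..<i]) * y i
          * prod_list (map x [Suc i..<Suc (Suc n)])) + sgn_deg (\<Sum>j=1..n. e j) (prod_upto x n) * y (Suc n)"
    unfolding massey_sum_def by (simp del: upt_Suc add: sum.cl_ivl_Suc prod_list_sgn_deg)
  also have "(\<Sum>i=1..n. prod_list (map (\<lambda>j. sgn_deg (e j) (x j)) [1..<i]) * y i
          * prod_list (map x [Suc i..<Suc (Suc n)])) = massey_sum e x y n * x (Suc n)"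
    unfolding massey_sum_def sum_distrib_right by (rule sum.cong) (auto simp: mult.assoc)
  finally show ?thesis .
qed

definition defining_system :: "(int \<Rightarrow> 'a::real_algebra_1 set) \<Rightarrow> ('a \<Rightarrow> 'a) \<Rightarrow> int \<Rightarrow> 'a
    \<Rightarrow> (nat \<Rightarrow> int) \<Rightarrow> (nat \<Rightarrow> 'a) \<Rightarrow> nat \<Rightarrow> (nat \<Rightarrow> 'a) \<Rightarrow> bool" where
  "defining_system G d p a q b n \<xi> \<longleftrightarrow> (\<forall>i\<in>{1..n}. \<xi> i \<in> G (p + q i - 1) \<and> d (\<xi> i) = a * b i)"

lemma massey_altdef:
  "massey G d p a q b n
     = {hclass d (massey_sum (\<lambda>j. p + q j - 1) \<xi> b n) | \<xi>. defining_system G d p a q b n \<xi>}"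
  unfolding massey_def massey_sum_def defining_system_def by (rule refl)

text \<open>The recursion is read off from \<open>a * massey_homotopy a x \<beta> n = prod_upto x' n - prod_upto x n\<close>
  for \<open>x' = x + a \<beta>\<close> and \<open>a\<close> central.\<close>

primrec massey_homotopy :: "'a::real_algebra_1 \<Rightarrow> (nat \<Rightarrow> 'a) \<Rightarrow> (nat \<Rightarrow> 'a) \<Rightarrow> nat \<Rightarrow> 'a" where
  "massey_homotopy a x \<beta> 0 = 0"
| "massey_homotopy a x \<beta> (Suc n)
     = massey_homotopy a x \<beta> n * x (Suc n) + prod_upto (\<lambda>j. x j + a * \<beta> j) n * \<beta> (Suc n)"

locale real_dga =
  fixes G :: "int \<Rightarrow> 'a::real_algebra_1 set" and d :: "'a \<Rightarrow> 'a"
  assumes subspace_G: "subspace (G k)"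
    and homogeneous_decomposition: "\<exists>K c. finite K \<and> (\<forall>k\<in>K. c k \<in> G k) \<and> x = (\<Sum>k\<in>K. c k)"
    and homogeneous_independent:
      "finite K \<Longrightarrow> \<forall>k\<in>K. c k \<in> G k \<Longrightarrow> (\<Sum>k\<in>K. c k) = 0 \<Longrightarrow> k \<in> K \<Longrightarrow> c k = 0"
    and one_in_G: "1 \<in> G 0"
    and mult_in_G: "x \<in> G j \<Longrightarrow> y \<in> G k \<Longrightarrow> x * y \<in> G (j + k)"
    and graded_commute: "x \<in> G j \<Longrightarrow> y \<in> G k \<Longrightarrow> x * y = sgn_deg (j * k) (y * x)"
    and linear_d: "linear d"
    and d_in_G: "x \<in> G k \<Longrightarrow> d x \<in> G (k + 1)"
    and d_d: "d (d x) = 0"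
    and leibniz: "x \<in> G j \<Longrightarrow> d (x * y) = d x * y + sgn_deg j (x * d y)"

lemma real_dgaI:
  assumes "dga G d"
  shows "real_dga G d"
  using assms unfolding dga_def real_dga_def by (elim conjE) (intro conjI; assumption | meson)

context real_dga
begin

lemma zero_in_G: "0 \<in> G k"
  using subspace_G by (rule subspace_0)

lemma add_in_G: "x \<in> G k \<Longrightarrow> y \<in> G k \<Longrightarrow> x + y \<in> G k"
  using subspace_G by (rule subspace_add)

lemma diff_in_G: "x \<in> G k \<Longrightarrow> y \<in> G k \<Longrightarrow> x - y \<in> G k"
  using subspace_G by (rule subspace_diff)

lemma neg_in_G: "x \<in> G k \<Longrightarrow> - x \<in> G k"
  using subspace_G by (rule subspace_neg)

lemma sgn_deg_in_G: "x \<in> G k \<Longrightarrow> sgn_deg j x \<in> G k"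
  by (simp add: sgn_deg_def neg_in_G)

lemma in_G_cong: "x \<in> G j \<Longrightarrow> j = k \<Longrightarrow> x \<in> G k"
  by simp

lemma d_add: "d (x + y) = d x + d y"
  using linear_d by (rule linear_add)

lemma d_zero [simp]: "d 0 = 0"
  using linear_d by (rule linear_0)

lemma d_one [simp]: "d 1 = 0"
proof -
  have "d 1 = d 1 * 1 + sgn_deg 0 (1 * d 1)"
    using leibniz[OF one_in_G, of 1] by simp
  then show ?thesis by (simp add: sgn_deg_def)
qed

lemma even_deg_central:
  assumes "a \<in> G p" "even p"
  shows "a * z = z * a"
proof -
  obtain K c where K: "finite K" "\<forall>k\<in>K. c k \<in> G k" "z = (\<Sum>k\<in>K. c k)"
    using homogeneous_decomposition by blast
  have "a * c k = c k * a" if "k \<in> K" for k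
    using graded_commute[OF assms(1), of "c k" k] K(2) that assms(2) by (simp add: sgn_deg_def)
  then show ?thesis
    using K(3) by (simp add: sum_distrib_left sum_distrib_right)
qed

lemma even_deg_central_assoc:
  assumes "a \<in> G p" "even p"
  shows "u * (a * z) = a * (u * z)"
  using even_deg_central[OF assms, of u] by (simp flip: mult.assoc)

lemma odd_deg_square_zero:
  assumes "x \<in> G k" "odd k"
  shows "x * x = 0"
proof -
  have "x * x = - (x * x)"
    using graded_commute[OF assms(1) assms(1)] assms(2) by (simp add: sgn_deg_def)
  then have "(2::real) *\<^sub>R (x * x) = 0"
    by (metis add.left_inverse scaleR_2)
  then show ?thesis
    by simp
qed

lemma d_mult_closed_even:
  assumes "a \<in> G p" "even p" "d a = 0"
  shows "d (a * z) = a * d z"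
  using leibniz[OF assms(1), of z] assms(2,3) by (simp add: sgn_deg_def)

lemma homogeneous_component_unique:
  assumes "finite K" "\<forall>k\<in>K. c k \<in> G k" "z \<in> G m" "(\<Sum>k\<in>K. c k) = z"
  shows "z = (if m \<in> K then c m else 0)"
proof -
  define c' where "c' k = (if k \<in> K then c k else 0) - (if k = m then z else 0)" for k
  have "(\<Sum>k\<in>insert m K. c' k) = 0"
    using assms(1,4) by (simp add: c'_def sum_subtractf sum.If_cases Int_insert_left insert_absorb)
  moreover have "\<forall>k\<in>insert m K. c' k \<in> G k"
    using assms(2,3) zero_in_G by (auto simp: c'_def intro: diff_in_G neg_in_G)
  ultimately have "c' m = 0"
    using homogeneous_independent[of "insert m K" c' m] assms(1) by simp
  then show ?thesis
    by (simp add: c'_def)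
qed

text \<open>Only the component of degree \<open>k - 1\<close> of an arbitrary primitive contributes to \<open>z\<close>.\<close>

lemma exact_homogeneous_primitive:
  assumes "z \<in> G k" "z \<in> range d"
  obtains w where "w \<in> G (k - 1)" "d w = z"
proof -
  obtain w0 where "z = d w0"
    using assms(2) by blast
  obtain K c where K: "finite K" "\<forall>k\<in>K. c k \<in> G k" "w0 = (\<Sum>k\<in>K. c k)"
    using homogeneous_decomposition by blast
  have "z = (\<Sum>k\<in>K. d (c k))"
    using \<open>z = d w0\<close> K(3) linear_d by (simp add: linear_sum)
  also have "\<dots> = (\<Sum>m\<in>(\<lambda>k. k + 1) ` K. d (c (m - 1)))"
    by (simp add: sum.reindex inj_on_def)
  finally have "z = (if k \<in> (\<lambda>k. k + 1) ` K then d (c (k - 1)) else 0)"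
    using homogeneous_component_unique[of "(\<lambda>k. k + 1) ` K" "\<lambda>m. d (c (m - 1))" z k]
      K(1,2) assms(1) d_in_G by force
  moreover have "k \<in> (\<lambda>k. k + 1) ` K \<longleftrightarrow> k - 1 \<in> K"
    by force
  ultimately show ?thesis
    using that[of "c (k - 1)"] that[of 0] K(2) zero_in_G by (cases "k - 1 \<in> K") auto
qed

lemma cohomologous_homogeneous_primitive:
  assumes "u \<in> G k" "v \<in> G k" "hclass d u = hclass d v"
  obtains w where "w \<in> G (k - 1)" "d w = u - v"
  using exact_homogeneous_primitive[OF diff_in_G[OF assms(1,2)]]
    assms(3) hclass_eq_iff[OF linear_d] by blast

lemma cohomologous_families_homogeneous_primitives:
  assumes "\<forall>i\<in>I. u i \<in> G (k i) \<and> v i \<in> G (k i) \<and> hclass d (u i) = hclass d (v i)"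
  obtains w where "\<forall>i\<in>I. w i \<in> G (k i - 1) \<and> d (w i) = u i - v i"
proof -
  have "\<forall>i\<in>I. \<exists>w. w \<in> G (k i - 1) \<and> d w = u i - v i"
  proof
    fix i
    assume "i \<in> I"
    then have "u i \<in> G (k i)" "v i \<in> G (k i)" "hclass d (u i) = hclass d (v i)"
      using assms by auto
    then show "\<exists>w. w \<in> G (k i - 1) \<and> d w = u i - v i"
      by (rule cohomologous_homogeneous_primitive) blast
  qed
  then show ?thesis
    using that by (metis bchoice)
qed

lemma odd_deg_commute:
  assumes "\<alpha> \<in> G r" "odd r" "u \<in> G m"
  shows "u * \<alpha> = sgn_deg m (\<alpha> * u)"
  using graded_commute[OF assms(3,1)] assms(2) by (simp add: sgn_deg_def)

lemma prod_upto_in_G: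
  assumes "\<forall>j\<in>{1..n}. x j \<in> G (e j)"
  shows "prod_upto x n \<in> G (\<Sum>j=1..n. e j)"
  using assms
proof (induction n)
  case 0
  then show ?case using one_in_G by simp
next
  case (Suc n)
  then show ?case
    by (auto intro!: in_G_cong[OF mult_in_G])
qed

lemma massey_sum_in_G:
  assumes "\<forall>j\<in>{1..n}. x j \<in> G (e j) \<and> y j \<in> G (e j - r)"
  shows "massey_sum e x y n \<in> G ((\<Sum>j=1..n. e j) - r)"
  using assms
proof (induction n)
  case 0
  then show ?case using zero_in_G by simp
next
  case (Suc n)
  have "massey_sum e x y n * x (Suc n) \<in> G ((\<Sum>j=1..Suc n. e j) - r)"
    using Suc by (auto intro!: in_G_cong[OF mult_in_G])
  moreover have "sgn_deg (\<Sum>j=1..n. e j) (prod_upto x n) * y (Suc n) \<in> G ((\<Sum>j=1..Suc n. e j) - r)"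
    using Suc.prems prod_upto_in_G[of n x e]
    by (auto intro!: in_G_cong[OF mult_in_G] sgn_deg_in_G)
  ultimately show ?case
    by (simp add: massey_sum_Suc add_in_G)
qed

lemma d_prod_upto:
  assumes "a \<in> G p" "even p" "\<forall>j\<in>{1..n}. x j \<in> G (e j) \<and> d (x j) = a * y j"
  shows "d (prod_upto x n) = a * massey_sum e x y n"
  using assms(3)
proof (induction n)
  case 0
  then show ?case by simp
next
  case (Suc n)
  let ?E = "\<Sum>j=1..n. e j"
  have "prod_upto x n \<in> G ?E"
    using prod_upto_in_G Suc.prems by simp
  then have "d (prod_upto x (Suc n))
      = d (prod_upto x n) * x (Suc n) + sgn_deg ?E (prod_upto x n * d (x (Suc n)))"
    by (simp add: leibniz)
  also have "\<dots> = a * massey_sum e x y n * x (Suc n) + sgn_deg ?E (prod_upto x n * a * y (Suc n))"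
    using Suc by (simp add: mult.assoc)
  also have "\<dots> = a * massey_sum e x y (Suc n)"
    using even_deg_central_assoc[OF assms(1,2), of "prod_upto x n"]
    by (simp add: massey_sum_Suc distrib_left sgn_deg_mult_left sgn_deg_mult_right mult.assoc)
  finally show ?case .
qed

lemma prod_upto_shift_odd:
  assumes "\<alpha> \<in> G r" "odd r" "\<forall>j\<in>{1..n}. x j \<in> G (e j) \<and> y j \<in> G (e j - r)"
  shows "prod_upto (\<lambda>j. x j + \<alpha> * y j) n = prod_upto x n + \<alpha> * massey_sum e x y n"
  using assms(3)
proof (induction n)
  case 0
  then show ?case by simp
next
  case (Suc n)
  let ?E = "\<Sum>j=1..n. e j" and ?P = "prod_upto x n" and ?S = "massey_sum e x y n"
  have "?P \<in> G ?E" "?S \<in> G (?E - r)"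
    using prod_upto_in_G massey_sum_in_G Suc.prems by simp_all
  then have P_\<alpha>: "?P * \<alpha> = sgn_deg ?E (\<alpha> * ?P)" and S_\<alpha>: "?S * \<alpha> = sgn_deg (?E - r) (\<alpha> * ?S)"
    using odd_deg_commute[OF assms(1,2)] by blast+
  have P_\<alpha>': "?P * (\<alpha> * z) = sgn_deg ?E (\<alpha> * (?P * z))" for z
    using P_\<alpha> by (simp add: sgn_deg_mult_left flip: mult.assoc)
  have \<alpha>_S_\<alpha>: "\<alpha> * (?S * (\<alpha> * z)) = 0" for z
    using S_\<alpha> odd_deg_square_zero[OF assms(1,2)]
    by (simp add: sgn_deg_def flip: mult.assoc)
  show ?case
    using Suc P_\<alpha>' \<alpha>_S_\<alpha>
    by (simp add: massey_sum_Suc algebra_simps sgn_deg_mult_left sgn_deg_mult_right)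
qed

lemma massey_sum_shift_odd:
  assumes "\<alpha> \<in> G r" "odd r" "\<forall>j\<in>{1..n}. x j \<in> G (e j) \<and> y j \<in> G (e j - r)"
  shows "massey_sum e (\<lambda>j. x j + \<alpha> * y j) y n = massey_sum e x y n"
  using assms(3)
proof (induction n)
  case 0
  then show ?case by simp
next
  case (Suc n)
  let ?E = "\<Sum>j=1..n. e j" and ?S = "massey_sum e x y n"
  have "?S \<in> G (?E - r)"
    using massey_sum_in_G Suc.prems by simp
  then have "?S * \<alpha> = sgn_deg (?E - r) (\<alpha> * ?S)"
    using odd_deg_commute[OF assms(1,2)] by blast
  then have S_\<alpha>: "?S * (\<alpha> * z) = - sgn_deg ?E (\<alpha> * (?S * z))" for z
    using assms(2) by (simp add: sgn_deg_def flip: mult.assoc)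
  show ?case
    using Suc prod_upto_shift_odd[OF assms(1,2), of n x e y] S_\<alpha>
    by (simp add: massey_sum_Suc algebra_simps sgn_deg_mult_left sgn_deg_mult_right sgn_deg_add)
qed

lemma prod_upto_shift_central:
  assumes "a \<in> G p" "even p"
  shows "prod_upto (\<lambda>j. x j + a * \<beta> j) n = prod_upto x n + a * massey_homotopy a x \<beta> n"
proof (induction n)
  case 0
  then show ?case by simp
next
  case (Suc n)
  then show ?case
    using even_deg_central_assoc[OF assms, of "massey_homotopy a x \<beta> n"]
      even_deg_central_assoc[OF assms, of "prod_upto x n"]
    by (simp add: algebra_simps)
qed

lemma massey_homotopy_in_G:
  assumes "a \<in> G p" "\<forall>j\<in>{1..n}. x j \<in> G (e j) \<and> \<beta> j \<in> G (e j - p)"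
  shows "massey_homotopy a x \<beta> n \<in> G ((\<Sum>j=1..n. e j) - p)"
  using assms(2)
proof (induction n)
  case 0
  then show ?case using zero_in_G by simp
next
  case (Suc n)
  have "\<forall>j\<in>{1..n}. x j + a * \<beta> j \<in> G (e j)"
    using Suc.prems by (auto intro!: add_in_G in_G_cong[OF mult_in_G[OF assms(1)]])
  then have "prod_upto (\<lambda>j. x j + a * \<beta> j) n \<in> G (\<Sum>j=1..n. e j)"
    by (rule prod_upto_in_G)
  then show ?case
    using Suc by (auto intro!: add_in_G in_G_cong[OF mult_in_G])
qed

lemma d_massey_homotopy:
  assumes a: "a \<in> G p" "even p" "d a = 0"
    and "\<forall>j\<in>{1..n}. x j \<in> G (e j) \<and> \<beta> j \<in> G (e j - p) \<and> d (x j) = a * y j \<and> d (\<beta> j) = y' j - y j"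
  shows "d (massey_homotopy a x \<beta> n) = massey_sum e (\<lambda>j. x j + a * \<beta> j) y' n - massey_sum e x y n"
  using assms(4)
proof (induction n)
  case 0
  then show ?case by simp
next
  case (Suc n)
  let ?x' = "\<lambda>j. x j + a * \<beta> j" and ?E = "\<Sum>j=1..n. e j"
  let ?T = "massey_homotopy a x \<beta> n" and ?P = "prod_upto x n" and ?P' = "prod_upto ?x' n"
    and ?S = "massey_sum e x y n" and ?S' = "massey_sum e ?x' y' n"
  have IH: "d ?T = ?S' - ?S"
    using Suc by simp
  have dx: "d (x (Suc n)) = a * y (Suc n)" and d\<beta>: "d (\<beta> (Suc n)) = y' (Suc n) - y (Suc n)"
    using Suc.prems by simp_all
  have x': "\<forall>j\<in>{1..n}. ?x' j \<in> G (e j) \<and> d (?x' j) = a * y' j"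
    using Suc.prems
    by (auto intro!: add_in_G in_G_cong[OF mult_in_G[OF a(1)]]
        simp: d_add d_mult_closed_even[OF a] simp flip: distrib_left)
  have T: "?T \<in> G (?E - p)"
    using massey_homotopy_in_G[OF a(1)] Suc.prems by simp
  have P': "?P' \<in> G ?E"
    using prod_upto_in_G x' by simp
  have dP': "d ?P' = a * ?S'"
    using d_prod_upto[OF a(1,2) x'] .
  have P'_eq: "?P' = ?P + a * ?T"
    using prod_upto_shift_central[OF a(1,2)] .
  have "d (massey_homotopy a x \<beta> (Suc n))
      = d ?T * x (Suc n) + sgn_deg (?E - p) (?T * d (x (Suc n)))
        + (d ?P' * \<beta> (Suc n) + sgn_deg ?E (?P' * d (\<beta> (Suc n))))"
    using leibniz[OF T] leibniz[OF P'] by (simp add: d_add)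
  also have "\<dots> = massey_sum e ?x' y' (Suc n) - massey_sum e x y (Suc n)"
    using a(2) even_deg_central_assoc[OF a(1,2), of ?T]
      even_deg_central_assoc[OF a(1,2), of ?S']
    unfolding IH dP' dx d\<beta> unfolding massey_sum_Suc P'_eq
    by (cases "even ?E") (simp_all add: sgn_deg_def algebra_simps)
  finally show ?case .
qed

lemma exact_mult_shift:
  assumes a: "a \<in> G p" "even p" "d a = 0"
    and "\<alpha> \<in> G r" "d \<alpha> = a' - a" "d b' = 0" "d \<beta> = b' - b" "exact d (a * b)"
  shows "exact d (a' * b')"
proof -
  obtain w where w: "d w = a * b"
    using assms(8) unfolding exact_def by auto
  have \<alpha>b': "d (\<alpha> * b') = (a' - a) * b'"
    using leibniz[OF assms(4), of b'] assms(5,6) by (simp add: sgn_deg_def)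
  have "d (w + a * \<beta> + \<alpha> * b') = a * b + a * (b' - b) + (a' - a) * b'"
    unfolding d_add d_mult_closed_even[OF a] w \<alpha>b' assms(7) ..
  also have "\<dots> = a' * b'"
    by (simp add: algebra_simps)
  finally show ?thesis
    unfolding exact_def by (metis rangeI)
qed

lemma massey_subset_shift_b:
  assumes a: "a \<in> G p" "even p" "d a = 0"
    and \<beta>: "\<forall>i\<in>{1..n}. \<beta> i \<in> G (q i - 1) \<and> d (\<beta> i) = b' i - b i"
  shows "massey G d p a q b n \<subseteq> massey G d p a q b' n"
proof
  let ?e = "\<lambda>j. p + q j - 1"
  fix X
  assume "X \<in> massey G d p a q b n"
  then obtain \<xi> where X: "X = hclass d (massey_sum ?e \<xi> b n)" and \<xi>: "defining_system G d p a q b n \<xi>"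
    unfolding massey_altdef by blast
  let ?\<xi>' = "\<lambda>j. \<xi> j + a * \<beta> j"
  have "defining_system G d p a q b' n ?\<xi>'"
    using \<xi> \<beta> unfolding defining_system_def
    by (auto intro!: add_in_G in_G_cong[OF mult_in_G[OF a(1)]]
        simp: d_add d_mult_closed_even[OF a] simp flip: distrib_left)
  moreover have "d (massey_homotopy a \<xi> \<beta> n) = massey_sum ?e ?\<xi>' b' n - massey_sum ?e \<xi> b n"
    using \<xi> \<beta> unfolding defining_system_def by (intro d_massey_homotopy[OF a]) simp
  then have "hclass d (massey_sum ?e ?\<xi>' b' n) = X"
    unfolding X hclass_eq_iff[OF linear_d] by (metis rangeI)
  ultimately show "X \<in> massey G d p a q b' n"
    unfolding massey_altdef by blast
qed

lemma massey_eq_shift_b: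
  assumes a: "a \<in> G p" "even p" "d a = 0"
    and \<beta>: "\<forall>i\<in>{1..n}. \<beta> i \<in> G (q i - 1) \<and> d (\<beta> i) = b' i - b i"
  shows "massey G d p a q b' n = massey G d p a q b n"
proof
  have "\<forall>i\<in>{1..n}. - \<beta> i \<in> G (q i - 1) \<and> d (- \<beta> i) = b i - b' i"
    using \<beta> neg_in_G linear_neg[OF linear_d] by simp
  then show "massey G d p a q b' n \<subseteq> massey G d p a q b n"
    by (rule massey_subset_shift_b[OF a])
  show "massey G d p a q b n \<subseteq> massey G d p a q b' n"
    using \<beta> by (rule massey_subset_shift_b[OF a])
qed

lemma massey_subset_shift_a:
  assumes "even p" and \<alpha>: "\<alpha> \<in> G (p - 1)" "d \<alpha> = a' - a"
    and b: "\<forall>i\<in>{1..n}. b i \<in> G (q i) \<and> d (b i) = 0"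
  shows "massey G d p a q b n \<subseteq> massey G d p a' q b n"
proof
  let ?e = "\<lambda>j. p + q j - 1"
  fix X
  assume "X \<in> massey G d p a q b n"
  then obtain \<xi> where X: "X = hclass d (massey_sum ?e \<xi> b n)" and \<xi>: "defining_system G d p a q b n \<xi>"
    unfolding massey_altdef by blast
  let ?\<xi>' = "\<lambda>j. \<xi> j + \<alpha> * b j"
  have "d (\<alpha> * b i) = (a' - a) * b i" if "i \<in> {1..n}" for i
    using leibniz[OF \<alpha>(1), of "b i"] \<alpha>(2) b that by (simp add: sgn_deg_def)
  then have "defining_system G d p a' q b n ?\<xi>'"
    using \<xi> b unfolding defining_system_def
    by (auto intro!: add_in_G in_G_cong[OF mult_in_G[OF \<alpha>(1)]] simp: d_add algebra_simps)
  moreover have "massey_sum ?e ?\<xi>' b n = massey_sum ?e \<xi> b n"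
    using \<xi> b \<open>even p\<close> unfolding defining_system_def
    by (intro massey_sum_shift_odd[OF \<alpha>(1)]) simp_all
  ultimately show "X \<in> massey G d p a' q b n"
    unfolding massey_altdef X by (auto intro!: exI[of _ ?\<xi>'])
qed

lemma massey_eq_shift_a:
  assumes "even p" and \<alpha>: "\<alpha> \<in> G (p - 1)" "d \<alpha> = a' - a"
    and b: "\<forall>i\<in>{1..n}. b i \<in> G (q i) \<and> d (b i) = 0"
  shows "massey G d p a' q b n = massey G d p a q b n"
proof
  have "- \<alpha> \<in> G (p - 1)" "d (- \<alpha>) = a - a'"
    using \<alpha> neg_in_G linear_neg[OF linear_d] by simp_all
  then show "massey G d p a' q b n \<subseteq> massey G d p a q b n"
    using b by (rule massey_subset_shift_a[OF \<open>even p\<close>])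
  show "massey G d p a q b n \<subseteq> massey G d p a' q b n"
    using \<alpha> b by (rule massey_subset_shift_a[OF \<open>even p\<close>])
qed

end

theorem lemma2p5:
  fixes G :: "int \<Rightarrow> 'a::real_algebra_1 set" and d :: "'a \<Rightarrow> 'a"
    and p :: int and q :: "nat \<Rightarrow> int" and n :: nat
    and a a' :: 'a and b b' :: "nat \<Rightarrow> 'a"
  assumes "dga G d"
    and "a \<in> G p" and "even p" and "d a = 0"
    and "\<forall>i\<in>{1..n}. b i \<in> G (q i) \<and> d (b i) = 0 \<and> exact d (a * b i)"
    and "a' \<in> G p" and "d a' = 0" and "hclass d a' = hclass d a"
    and "\<forall>i\<in>{1..n}. b' i \<in> G (q i) \<and> d (b' i) = 0 \<and> hclass d (b' i) = hclass d (b i)"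
  shows "(\<forall>i\<in>{1..n}. exact d (a' * b' i)) \<and> massey G d p a' q b' n = massey G d p a q b n"
proof -
  interpret real_dga G d
    using assms(1) by (rule real_dgaI)
  obtain \<alpha> where \<alpha>: "\<alpha> \<in> G (p - 1)" "d \<alpha> = a' - a"
    using cohomologous_homogeneous_primitive[OF assms(6,2,8)] by blast
  obtain \<beta> where \<beta>: "\<forall>i\<in>{1..n}. \<beta> i \<in> G (q i - 1) \<and> d (\<beta> i) = b' i - b i"
    using cohomologous_families_homogeneous_primitives[of "{1..n}" b' q b] assms(5,9) by auto
  have "\<forall>i\<in>{1..n}. exact d (a' * b' i)"
  proof
    fix i
    assume "i \<in> {1..n}"
    then show "exact d (a' * b' i)"
      using assms(5,9) \<beta> by (intro exact_mult_shift[OF assms(2-4) \<alpha>, of "b' i" "\<beta> i" "b i"]) auto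
  qed
  moreover have "massey G d p a' q b' n = massey G d p a q b' n"
    using assms(3,9) \<alpha> by (intro massey_eq_shift_a) auto
  moreover have "massey G d p a q b' n = massey G d p a q b n"
    using assms(2-4) \<beta> by (rule massey_eq_shift_b)
  ultimately show ?thesis
    by simp
qed

end
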